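(* Let $X$ be a real Banach space and let $x, y \in X$ be non-zero. Then the following are equivalent: (i) there exist $\lambda > 0$ and $r > 0$ such that the open ball $B(\lambda x, r) = \{ z \in X : \|\lambda x - z\| < r\}$ contains $y$ but does not contain the zero vector; (ii) $\rho'_{-}(x, y) > 0$.
   Context: For $x, y$ in a real normed space $X$, the norm derivatives are $\rho'_{+}(x,y) = \lim_{t \to 0^+} \|x\| \frac{\|x+ty\| - \|x\|}{t}$ and $\rho'_{-}(x,y) = \lim_{t \to 0^-} \|x\| \frac{\|x+ty\| - \|x\|}{t}$. Balls are open balls. *)

theory Defs
  imports "HOL-Analysis.Analysis"
begin

text \<open>Left norm derivative: rho'_-(x,y) = lim_{t -> 0^-} ||x|| (||x+ty|| - ||x||)/t.
  (The limit always exists by convexity of t |-> ||x+ty||.)\<close>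
definition rho_minus :: "'a::real_normed_vector \<Rightarrow> 'a \<Rightarrow> real" where
  "rho_minus x y = Lim (at_left 0) (\<lambda>t::real. norm x * ((norm (x + t *\<^sub>R y) - norm x) / t))"

definition rho_plus :: "'a::real_normed_vector \<Rightarrow> 'a \<Rightarrow> real" where
  "rho_plus x y = Lim (at_right 0) (\<lambda>t::real. norm x * ((norm (x + t *\<^sub>R y) - norm x) / t))"

end

theory Submission
  imports Defs
begin

text \<open>By convexity of \<open>t \<mapsto> \<parallel>x + t y\<parallel>\<close> the difference quotients at \<open>t < 0\<close> increase as
  \<open>t \<rightarrow> 0\<^sup>-\<close> and are bounded by \<open>\<parallel>y\<parallel>\<close>, so \<open>\<rho>'\<^sub>-(x,y)\<close> is \<open>\<parallel>x\<parallel>\<close> times their supremum. That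
  supremum is positive iff some quotient is, i.e. iff \<open>\<parallel>x - s y\<parallel> < \<parallel>x\<parallel>\<close> for some \<open>s > 0\<close>.
  Scaling by \<open>\<lambda> = 1/s\<close>, this says that \<open>y\<close> lies in the ball around \<open>\<lambda> x\<close> of radius \<open>\<parallel>\<lambda> x\<parallel>\<close>,
  the largest ball around \<open>\<lambda> x\<close> avoiding \<open>0\<close>.\<close>

definition norm_slope :: "'a::real_normed_vector \<Rightarrow> 'a \<Rightarrow> real \<Rightarrow> real" where
  "norm_slope x y t = (norm (x + t *\<^sub>R y) - norm x) / t"

lemma norm_slope_mono_neg:
  fixes x y :: "'a::real_normed_vector"
  assumes "a \<le> b" "b < 0"
  shows "norm_slope x y a \<le> norm_slope x y b"
proof -
  define l where "l = b / a"
  have a_neg: "a < 0" using assms by simp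
  have l: "0 < l" "l \<le> 1" "b = l * a"
    using assms a_neg by (auto simp: l_def field_simps)
  have "x + b *\<^sub>R y = l *\<^sub>R (x + a *\<^sub>R y) + (1 - l) *\<^sub>R x"
    by (simp add: l(3) algebra_simps)
  then have "norm (x + b *\<^sub>R y) \<le> l * norm (x + a *\<^sub>R y) + (1 - l) * norm x"
    using l norm_triangle_ineq[of "l *\<^sub>R (x + a *\<^sub>R y)" "(1 - l) *\<^sub>R x"] by simp
  then have "norm (x + b *\<^sub>R y) - norm x \<le> l * (norm (x + a *\<^sub>R y) - norm x)"
    by (simp add: algebra_simps)
  then have "l * (norm (x + a *\<^sub>R y) - norm x) / b \<le> norm_slope x y b"
    using assms by (simp add: norm_slope_def divide_right_mono_neg)
  also have "l * (norm (x + a *\<^sub>R y) - norm x) / b = norm_slope x y a"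
    using l a_neg by (simp add: norm_slope_def)
  finally show ?thesis .
qed

lemma norm_slope_le_norm:
  fixes x y :: "'a::real_normed_vector"
  assumes "t < 0"
  shows "norm_slope x y t \<le> norm y"
proof -
  have "norm x - norm (x + t *\<^sub>R y) \<le> norm (t *\<^sub>R y)"
    by (metis add_diff_cancel_left' norm_triangle_ineq2 norm_minus_commute)
  then have "norm x - norm (x + t *\<^sub>R y) \<le> - t * norm y"
    using assms by simp
  then show ?thesis
    using assms by (simp add: norm_slope_def divide_simps algebra_simps)
qed

lemma bdd_above_norm_slope_neg: "bdd_above (norm_slope x y ` {..<0})"
  by (auto intro!: bdd_aboveI[where M = "norm y"] norm_slope_le_norm)

lemma tendsto_norm_slope_at_left:
  "(norm_slope x y \<longlongrightarrow> (SUP t\<in>{..<0}. norm_slope x y t)) (at_left 0)"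
  using Lim_left_bound[where f = "norm_slope x y" and I = UNIV and x = 0 and K = "norm y"]
  by (auto intro: norm_slope_mono_neg norm_slope_le_norm)

lemma rho_minus_eq_SUP_norm_slope:
  "rho_minus x y = norm x * (SUP t\<in>{..<0}. norm_slope x y t)"
proof -
  have "rho_minus x y = Lim (at_left 0) (\<lambda>t. norm x * norm_slope x y t)"
    by (simp add: rho_minus_def norm_slope_def)
  moreover have "((\<lambda>t. norm x * norm_slope x y t) \<longlongrightarrow>
      norm x * (SUP t\<in>{..<0}. norm_slope x y t)) (at_left 0)"
    by (intro tendsto_intros tendsto_norm_slope_at_left)
  ultimately show ?thesis
    by (simp add: tendsto_Lim)
qed

lemma SUP_norm_slope_pos_iff:
  "0 < (SUP t\<in>{..<0}. norm_slope x y t) \<longleftrightarrow> (\<exists>s>0. norm (x - s *\<^sub>R y) < norm x)"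
proof -
  have "0 < (SUP t\<in>{..<0}. norm_slope x y t) \<longleftrightarrow> (\<exists>t<0. 0 < norm_slope x y t)"
    using less_cSUP_iff[OF _ bdd_above_norm_slope_neg, of 0] by auto
  also have "\<dots> \<longleftrightarrow> (\<exists>t<0. norm (x + t *\<^sub>R y) < norm x)"
    by (auto simp: norm_slope_def zero_less_divide_iff)
  also have "\<dots> \<longleftrightarrow> (\<exists>s>0. norm (x - s *\<^sub>R y) < norm x)"
    by (metis add_uminus_conv_diff neg_0_less_iff_less neg_less_0_iff_less scaleR_minus_left minus_minus)
  finally show ?thesis .
qed

lemma ball_containing_avoiding_zero_iff:
  fixes x y :: "'a::real_normed_vector"
  shows "(\<exists>c r. c > 0 \<and> r > 0 \<and> y \<in> ball (c *\<^sub>R x) r \<and> 0 \<notin> ball (c *\<^sub>R x) r)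
    \<longleftrightarrow> (\<exists>s>0. norm (x - s *\<^sub>R y) < norm x)"
proof -
  have scaled: "norm (c *\<^sub>R x - y) = c * norm (x - (1 / c) *\<^sub>R y)" if "c > 0" for c :: real
  proof -
    have "c *\<^sub>R x - y = c *\<^sub>R (x - (1 / c) *\<^sub>R y)"
      using that by (simp add: algebra_simps)
    then show ?thesis
      using that by simp
  qed
  show ?thesis
  proof
    assume "\<exists>c r. c > 0 \<and> r > 0 \<and> y \<in> ball (c *\<^sub>R x) r \<and> 0 \<notin> ball (c *\<^sub>R x) r"
    then obtain c r where "c > 0" "norm (c *\<^sub>R x - y) < r" "r \<le> c * norm x"
      by (auto simp: dist_norm)
    then have "c * norm (x - (1 / c) *\<^sub>R y) < c * norm x"
      using scaled[OF \<open>c > 0\<close>] by linarith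
    then have "norm (x - (1 / c) *\<^sub>R y) < norm x"
      using \<open>c > 0\<close> by simp
    then show "\<exists>s>0. norm (x - s *\<^sub>R y) < norm x"
      using \<open>c > 0\<close> by (intro exI[of _ "1 / c"]) simp
  next
    assume "\<exists>s>0. norm (x - s *\<^sub>R y) < norm x"
    then obtain s where s: "s > 0" "norm (x - s *\<^sub>R y) < norm x"
      by blast
    then have "norm ((1 / s) *\<^sub>R x - y) < norm ((1 / s) *\<^sub>R x)"
      using scaled[of "1 / s"] by (simp add: divide_strict_right_mono)
    moreover have "0 < norm x"
      using s(2) norm_ge_zero[of "x - s *\<^sub>R y"] by linarith
    ultimately show "\<exists>c r. c > 0 \<and> r > 0 \<and> y \<in> ball (c *\<^sub>R x) r \<and> 0 \<notin> ball (c *\<^sub>R x) r"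
      using s(1) by (intro exI[of _ "1 / s"] exI[of _ "norm ((1 / s) *\<^sub>R x)"]) (auto simp: dist_norm)
  qed
qed

theorem mainTheorem1:
  fixes x y :: "'a::banach"
  assumes "x \<noteq> 0" and "y \<noteq> 0"
  shows "(\<exists>c::real. \<exists>r::real. c > 0 \<and> r > 0 \<and>
            y \<in> ball (c *\<^sub>R x) r \<and> 0 \<notin> ball (c *\<^sub>R x) r)
         \<longleftrightarrow> rho_minus x y > 0"
proof -
  have "0 < norm x"
    using assms(1) by simp
  then have "rho_minus x y > 0 \<longleftrightarrow> 0 < (SUP t\<in>{..<0}. norm_slope x y t)"
    by (simp add: rho_minus_eq_SUP_norm_slope zero_less_mult_iff)
  then show ?thesis
    unfolding ball_containing_avoiding_zero_iff SUP_norm_slope_pos_iff by blast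
qed

end
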